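(* Let $M$ be a triangulated ideal 3-manifold with $\partial M=\varnothing$ and topological ideal triangulation $\mathcal D$. There is a branched covering $M^{\prime}$ of $M$ and a topological ideal triangulation $\mathcal{D}^{\prime}$ of $M^{\prime}$ such that $i_{\mathcal{D}^{\prime}}(e^{\prime})\geq6$ for each edge $e^{\prime}$ of $\mathcal{D}^{\prime}$.
   Context: A topological ideal tetrahedron is a space homeomorphic to a 3-simplex with its vertices removed. A triangulated ideal 3-manifold is a non-compact orientable 3-manifold obtained from a finite disjoint union of topological ideal tetrahedra by gluing faces of distinct tetrahedra pairwise via homeomorphisms, every face being glued; the tetrahedra with their faces and edges form its topological ideal triangulation. The index $i_{\mathcal D}(e)$ of an edge $e$ of a triangulation $\mathcal D$ is the integer $k\ge2$ such that every point of $e$ has a closed neighbourhood in the 2-skeleton of $\mathcal D$ homeomorphic to $k$ closed half-discs glued along their diameter. *)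

theory Defs
  imports Main "HOL-Combinatorics.Permutations"
begin

text \<open>Tetrahedra form a set T; each tetrahedron has vertices 0,1,2,3 and face i
  (for i < 4) is the face opposite vertex i.  gl (t,i) = (s,j) means that face i
  of t is glued to face j of s, via the vertex bijection sg (t,i) (which sends i to j).\<close>

definition ideal_gluing ::
  "'a set \<Rightarrow> ('a \<times> nat \<Rightarrow> 'a \<times> nat) \<Rightarrow> ('a \<times> nat \<Rightarrow> nat \<Rightarrow> nat) \<Rightarrow> bool" where
  "ideal_gluing T gl sg \<longleftrightarrow> finite T \<and> T \<noteq> {} \<and>
     (\<forall>t\<in>T. \<forall>i<4. fst (gl (t,i)) \<in> T \<and> snd (gl (t,i)) < 4
        \<and> fst (gl (t,i)) \<noteq> t
        \<and> gl (gl (t,i)) = (t,i)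
        \<and> bij_betw (sg (t,i)) {..<4} {..<4}
        \<and> sg (t,i) i = snd (gl (t,i))
        \<and> (\<forall>k<4. sg (gl (t,i)) (sg (t,i) k) = k))"

definition oriented_edge_rel ::
  "'a set \<Rightarrow> ('a \<times> nat \<Rightarrow> 'a \<times> nat) \<Rightarrow> ('a \<times> nat \<Rightarrow> nat \<Rightarrow> nat) \<Rightarrow> (('a \<times> nat \<times> nat) \<times> ('a \<times> nat \<times> nat)) set" where
  "oriented_edge_rel T gl sg =
     {((t,a,b), (fst (gl (t,i)), sg (t,i) a, sg (t,i) b)) | t a b i.
        t \<in> T \<and> a < 4 \<and> b < 4 \<and> a \<noteq> b \<and> i < 4 \<and> i \<noteq> a \<and> i \<noteq> b}"

text \<open>Manifold condition (for ideal gluings): no edge is identified with itself in reverse.\<close>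
definition valid_edges ::
  "'a set \<Rightarrow> ('a \<times> nat \<Rightarrow> 'a \<times> nat) \<Rightarrow> ('a \<times> nat \<Rightarrow> nat \<Rightarrow> nat) \<Rightarrow> bool" where
  "valid_edges T gl sg \<longleftrightarrow>
     (\<forall>t\<in>T. \<forall>a<4. \<forall>b<4. a \<noteq> b \<longrightarrow> ((t,a,b),(t,b,a)) \<notin> (oriented_edge_rel T gl sg)\<^sup>*)"

definition orientable_gluing ::
  "'a set \<Rightarrow> ('a \<times> nat \<Rightarrow> 'a \<times> nat) \<Rightarrow> ('a \<times> nat \<Rightarrow> nat \<Rightarrow> nat) \<Rightarrow> bool" where
  "orientable_gluing T gl sg \<longleftrightarrow>
     (\<exists>eps :: 'a \<Rightarrow> bool. \<forall>t\<in>T. \<forall>i<4.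
        (eps t = eps (fst (gl (t,i)))) \<longleftrightarrow>
          \<not> evenperm (\<lambda>k. if k < 4 then sg (t,i) k else k))"

text \<open>Triangulated ideal 3-manifold (orientable, boundary empty since every face is glued).\<close>
definition triangulated_ideal_3mfd ::
  "'a set \<Rightarrow> ('a \<times> nat \<Rightarrow> 'a \<times> nat) \<Rightarrow> ('a \<times> nat \<Rightarrow> nat \<Rightarrow> nat) \<Rightarrow> bool" where
  "triangulated_ideal_3mfd T gl sg \<longleftrightarrow>
     ideal_gluing T gl sg \<and> valid_edges T gl sg \<and> orientable_gluing T gl sg"

text \<open>Unoriented tetrahedron-edges (t,{a,b}) and their identification; an edge of the
  triangulation is an equivalence class.\<close>
definition tet_edges :: "'a set \<Rightarrow> ('a \<times> nat set) set" where
  "tet_edges T = {(t,E). t \<in> T \<and> E \<subseteq> {..<4} \<and> card E = 2}"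

definition edge_rel ::
  "'a set \<Rightarrow> ('a \<times> nat \<Rightarrow> 'a \<times> nat) \<Rightarrow> ('a \<times> nat \<Rightarrow> nat \<Rightarrow> nat) \<Rightarrow> (('a \<times> nat set) \<times> ('a \<times> nat set)) set" where
  "edge_rel T gl sg =
     {((t,E), (fst (gl (t,i)), sg (t,i) ` E)) | t E i.
        (t,E) \<in> tet_edges T \<and> i < 4 \<and> i \<notin> E}"

text \<open>Index of the edge containing the tetrahedron-edge x: the number of tetrahedron-edges
  (with multiplicity) identified to it, i.e. the number of half-discs around the edge.\<close>
definition edge_index ::
  "'a set \<Rightarrow> ('a \<times> nat \<Rightarrow> 'a \<times> nat) \<Rightarrow> ('a \<times> nat \<Rightarrow> nat \<Rightarrow> nat) \<Rightarrow> 'a \<times> nat set \<Rightarrow> nat" where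
  "edge_index T gl sg x = card ((edge_rel T gl sg)\<^sup>* `` {x})"

text \<open>Combinatorial branched covering (branched along edges): a surjective simplicial map,
  identity on vertex labels, sending tetrahedra to tetrahedra and commuting with the gluings.\<close>
definition branched_cover ::
  "'b set \<Rightarrow> ('b \<times> nat \<Rightarrow> 'b \<times> nat) \<Rightarrow> ('b \<times> nat \<Rightarrow> nat \<Rightarrow> nat) \<Rightarrow>
   'a set \<Rightarrow> ('a \<times> nat \<Rightarrow> 'a \<times> nat) \<Rightarrow> ('a \<times> nat \<Rightarrow> nat \<Rightarrow> nat) \<Rightarrow> ('b \<Rightarrow> 'a) \<Rightarrow> bool" where
  "branched_cover T' gl' sg' T gl sg p \<longleftrightarrow>
     p ` T' = T \<and>
     (\<forall>t\<in>T'. \<forall>i<4.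
        gl (p t, i) = (p (fst (gl' (t,i))), snd (gl' (t,i))) \<and>
        (\<forall>k<4. sg (p t, i) k = sg' (t,i) k))"

end

theory Submission
  imports Defs "HOL-Library.Numeral_Type"
begin

(* A dart (t, i) is face i of tetrahedron t, glued to the dart gl (t, i).  Take the cover
   whose sheets are the vectors of (Z/3)^darts and in which crossing from dart d to gl d moves
   from sheet s to s + e_d - e_(gl d).  It branches only along edges, so it is again an
   orientable ideal triangulation with valid edges.  Walking around an edge crosses faces
   c_0, c_1, ... with c_(j+1) <> gl c_j, and faces crossed at most two steps apart are never
   glued to each other.  Hence in any stretch of at most five crossings some dart occurs once
   or twice without its partner, so the total voltage is nonzero mod 3: the first six
   tetrahedron-edges met around an edge of the cover lie on distinct sheets, and every edge of
   the cover has index at least 6. *)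

lemma ideal_gluingD:
  assumes "ideal_gluing T gl sg" "t \<in> T" "i < 4"
  shows "fst (gl (t, i)) \<in> T" "snd (gl (t, i)) < 4" "fst (gl (t, i)) \<noteq> t"
    "gl (gl (t, i)) = (t, i)" "bij_betw (sg (t, i)) {..<4} {..<4}"
    "sg (t, i) i = snd (gl (t, i))" "k < 4 \<Longrightarrow> sg (gl (t, i)) (sg (t, i) k) = k"
  using assms by (auto simp: ideal_gluing_def)

lemma tet_edges_gluing_image:
  assumes "ideal_gluing T gl sg" "(t, E) \<in> tet_edges T" "i < 4"
  shows "(fst (gl (t, i)), sg (t, i) ` E) \<in> tet_edges T"
proof -
  have E: "t \<in> T" "E \<subseteq> {..<4}" "card E = 2"
    using assms(2) by (auto simp: tet_edges_def)
  have bij: "bij_betw (sg (t, i)) {..<4} {..<4}"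
    using ideal_gluingD(5)[OF assms(1) E(1) assms(3)] .
  then have "card (sg (t, i) ` E) = 2"
    using E by (metis bij_betw_def card_image inj_on_subset)
  moreover have "sg (t, i) ` E \<subseteq> {..<4}"
    using bij E by (auto simp: bij_betw_def)
  ultimately show ?thesis
    using ideal_gluingD(1)[OF assms(1) E(1) assms(3)] by (simp add: tet_edges_def)
qed

lemma edge_relI:
  "(t, E) \<in> tet_edges T \<Longrightarrow> i < 4 \<Longrightarrow> i \<notin> E \<Longrightarrow>
    ((t, E), (fst (gl (t, i)), sg (t, i) ` E)) \<in> edge_rel T gl sg"
  by (auto simp: edge_rel_def)

lemma edge_class_subset_tet_edges:
  assumes "ideal_gluing T gl sg" "x \<in> tet_edges T"
  shows "(edge_rel T gl sg)\<^sup>* `` {x} \<subseteq> tet_edges T"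
proof -
  have "edge_rel T gl sg `` tet_edges T \<subseteq> tet_edges T"
    using tet_edges_gluing_image[OF assms(1)] by (auto simp: edge_rel_def)
  then have "(edge_rel T gl sg)\<^sup>* `` tet_edges T = tet_edges T"
    by (rule Image_closed_trancl)
  with assms(2) show ?thesis by blast
qed

lemma finite_tet_edges: "finite T \<Longrightarrow> finite (tet_edges T)"
  by (rule finite_subset[of _ "T \<times> Pow {..<4}"]) (auto simp: tet_edges_def)

lemma finite_edge_class:
  assumes "ideal_gluing T gl sg" "x \<in> tet_edges T"
  shows "finite ((edge_rel T gl sg)\<^sup>* `` {x})"
  using edge_class_subset_tet_edges[OF assms] finite_tet_edges assms(1)
  by (metis finite_subset ideal_gluing_def)

lemma branched_cover_mem:
  "branched_cover T' gl' sg' T gl sg p \<Longrightarrow> t \<in> T' \<Longrightarrow> p t \<in> T"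
  by (auto simp: branched_cover_def)

lemma branched_coverD:
  assumes "branched_cover T' gl' sg' T gl sg p" "t \<in> T'" "i < 4"
  shows "gl (p t, i) = (p (fst (gl' (t, i))), snd (gl' (t, i)))"
    and "k < 4 \<Longrightarrow> sg (p t, i) k = sg' (t, i) k"
  using assms by (auto simp: branched_cover_def)

lemma branched_cover_comp:
  assumes q: "branched_cover T'' gl'' sg'' T' gl' sg' q"
    and p: "branched_cover T' gl' sg' T gl sg p"
  shows "branched_cover T'' gl'' sg'' T gl sg (p \<circ> q)"
  unfolding branched_cover_def
proof (intro conjI ballI allI impI)
  show "(p \<circ> q) ` T'' = T"
    using p q by (metis branched_cover_def image_comp)
next
  fix t and i :: nat assume t: "t \<in> T''" and i: "i < 4"
  note qt = branched_cover_mem[OF q t]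
  show "gl ((p \<circ> q) t, i) = ((p \<circ> q) (fst (gl'' (t, i))), snd (gl'' (t, i)))"
    using branched_coverD(1)[OF p qt i] branched_coverD(1)[OF q t i] by simp
  show "sg ((p \<circ> q) t, i) k = sg'' (t, i) k" if "k < 4" for k
    using branched_coverD(2)[OF p qt i that] branched_coverD(2)[OF q t i that] by simp
qed

lemma valid_edges_cover:
  assumes p: "branched_cover T' gl' sg' T gl sg p" and valid: "valid_edges T gl sg"
  shows "valid_edges T' gl' sg'"
proof -
  let ?P = "\<lambda>(t, a, b). (p t, a, b)"
  have step: "(?P u, ?P v) \<in> oriented_edge_rel T gl sg"
    if uv: "(u, v) \<in> oriented_edge_rel T' gl' sg'" for u v
  proof -
    obtain t a b i where uv: "u = (t, a, b)" "v = (fst (gl' (t, i)), sg' (t, i) a, sg' (t, i) b)"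
      and t: "t \<in> T'" and abi: "a < 4" "b < 4" "a \<noteq> b" "i < 4" "i \<noteq> a" "i \<noteq> b"
      using uv unfolding oriented_edge_rel_def by blast
    have "?P v = (fst (gl (p t, i)), sg (p t, i) a, sg (p t, i) b)"
      using uv branched_coverD[OF p t \<open>i < 4\<close>] abi by simp
    then show ?thesis
      using uv abi branched_cover_mem[OF p t] unfolding oriented_edge_rel_def by auto
  qed
  have path: "(?P u, ?P v) \<in> (oriented_edge_rel T gl sg)\<^sup>*"
    if "(u, v) \<in> (oriented_edge_rel T' gl' sg')\<^sup>*" for u v
    using that by (induction rule: rtrancl_induct) (auto dest: step intro: rtrancl_into_rtrancl)
  show ?thesis
    unfolding valid_edges_def
  proof (intro ballI allI impI notI)
    fix t a b assume "t \<in> T'" "a < 4" "b < 4" "a \<noteq> b"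
      and "((t, a, b), (t, b, a)) \<in> (oriented_edge_rel T' gl' sg')\<^sup>*"
    then show False
      using path valid branched_cover_mem[OF p] unfolding valid_edges_def by fastforce
  qed
qed

lemma orientable_gluing_cover:
  fixes p :: "'b \<Rightarrow> 'a"
  assumes p: "branched_cover T' gl' sg' T gl sg p" and "orientable_gluing T gl sg"
  shows "orientable_gluing T' gl' sg'"
proof -
  obtain eps :: "'a \<Rightarrow> bool" where eps: "\<forall>t\<in>T. \<forall>i<4. (eps t = eps (fst (gl (t, i)))) \<longleftrightarrow>
      \<not> evenperm (\<lambda>k. if k < 4 then sg (t, i) k else k)"
    using assms(2) unfolding orientable_gluing_def by blast
  have "(eps (p t) = eps (p (fst (gl' (t, i))))) \<longleftrightarrow>
      \<not> evenperm (\<lambda>k. if k < 4 then sg' (t, i) k else k)" if "t \<in> T'" "i < 4" for t i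
  proof -
    have "(\<lambda>k. if k < 4 then sg' (t, i) k else k) = (\<lambda>k. if k < 4 then sg (p t, i) k else k)"
      using branched_coverD(2)[OF p that] by auto
    moreover have "p (fst (gl' (t, i))) = fst (gl (p t, i))"
      using branched_coverD(1)[OF p that] by simp
    ultimately show ?thesis
      using eps branched_cover_mem[OF p that(1)] that(2) by simp
  qed
  then show ?thesis
    unfolding orientable_gluing_def by (intro exI[of _ "eps \<circ> p"]) simp
qed

lemma triangulated_ideal_3mfd_cover:
  assumes "ideal_gluing T' gl' sg'" "branched_cover T' gl' sg' T gl sg p"
    "triangulated_ideal_3mfd T gl sg"
  shows "triangulated_ideal_3mfd T' gl' sg'"
  using assms valid_edges_cover orientable_gluing_cover
  unfolding triangulated_ideal_3mfd_def by blast

lemma edge_index_le_cover: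
  assumes ig': "ideal_gluing T' gl' sg'" and p: "branched_cover T' gl' sg' T gl sg p"
    and x: "(t, E) \<in> tet_edges T'"
  shows "edge_index T gl sg (p t, E) \<le> edge_index T' gl' sg' (t, E)"
proof -
  let ?H = "\<lambda>(t, E). (p t, E)"
  let ?A = "(edge_rel T' gl' sg')\<^sup>* `` {(t, E)}"
  have lift: "y \<in> ?H ` ?A" if "((p t, E), y) \<in> (edge_rel T gl sg)\<^sup>*" for y
    using that
  proof (induction rule: rtrancl_induct)
    case base
    show ?case by force
  next
    case (step y z)
    then obtain u F where u: "(u, F) \<in> ?A" "y = (p u, F)"
      by auto
    have uF: "u \<in> T'" "F \<subseteq> {..<4}" "(u, F) \<in> tet_edges T'"
      using edge_class_subset_tet_edges[OF ig' x] u(1) by (auto simp: tet_edges_def)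
    from step.hyps(2) u(2) obtain i where i: "i < 4" "i \<notin> F"
      and z: "z = (fst (gl (p u, i)), sg (p u, i) ` F)"
      unfolding edge_rel_def by auto
    let ?u' = "(fst (gl' (u, i)), sg' (u, i) ` F)"
    have "((u, F), ?u') \<in> edge_rel T' gl' sg'"
      using uF(3) i by (rule edge_relI)
    with u(1) have "?u' \<in> ?A"
      by (auto intro: rtrancl_into_rtrancl)
    moreover have "sg' (u, i) ` F = sg (p u, i) ` F"
      using branched_coverD(2)[OF p uF(1) i(1)] uF(2) by (intro image_cong) auto
    then have "?H ?u' = z"
      using z branched_coverD(1)[OF p uF(1) i(1)] by simp
    ultimately show ?case
      by force
  qed
  have fin: "finite ?A"
    by (rule finite_edge_class[OF ig' x])
  have "edge_index T gl sg (p t, E) \<le> card (?H ` ?A)"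
    unfolding edge_index_def using lift by (intro card_mono finite_imageI fin) auto
  also have "\<dots> \<le> card ?A"
    by (rule card_image_le[OF fin])
  finally show ?thesis
    unfolding edge_index_def .
qed

lemma edge_index_bound_cover:
  assumes ig': "ideal_gluing T' gl' sg'" and p: "branched_cover T' gl' sg' T gl sg p"
    and bound: "\<forall>x\<in>tet_edges T. n \<le> edge_index T gl sg x"
  shows "\<forall>x\<in>tet_edges T'. n \<le> edge_index T' gl' sg' x"
proof
  fix x assume x: "x \<in> tet_edges T'"
  obtain t E where x_eq: "x = (t, E)"
    by force
  have "(p t, E) \<in> tet_edges T"
    using x x_eq branched_cover_mem[OF p] by (simp add: tet_edges_def)
  then show "n \<le> edge_index T' gl' sg' x"
    using bound edge_index_le_cover[OF ig' p x[unfolded x_eq]] x_eq by fastforce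
qed

definition relabel_gl ::
  "('a \<Rightarrow> 'b) \<Rightarrow> 'a set \<Rightarrow> ('a \<times> nat \<Rightarrow> 'a \<times> nat) \<Rightarrow> 'b \<times> nat \<Rightarrow> 'b \<times> nat" where
  "relabel_gl f T gl = (\<lambda>(m, i). apfst f (gl (inv_into T f m, i)))"

definition relabel_sg ::
  "('a \<Rightarrow> 'b) \<Rightarrow> 'a set \<Rightarrow> ('a \<times> nat \<Rightarrow> nat \<Rightarrow> nat) \<Rightarrow> 'b \<times> nat \<Rightarrow> nat \<Rightarrow> nat" where
  "relabel_sg f T sg = (\<lambda>(m, i). sg (inv_into T f m, i))"

lemma relabel_gl_image [simp]:
  "inj_on f T \<Longrightarrow> t \<in> T \<Longrightarrow> relabel_gl f T gl (f t, i) = apfst f (gl (t, i))"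
  by (simp add: relabel_gl_def)

lemma relabel_sg_image [simp]:
  "inj_on f T \<Longrightarrow> t \<in> T \<Longrightarrow> relabel_sg f T sg (f t, i) = sg (t, i)"
  by (simp add: relabel_sg_def)

lemma ideal_gluing_relabel:
  assumes ig: "ideal_gluing T gl sg" and f: "inj_on f T"
  shows "ideal_gluing (f ` T) (relabel_gl f T gl) (relabel_sg f T sg)"
  unfolding ideal_gluing_def
proof (intro conjI ballI allI impI)
  show "finite (f ` T)" "f ` T \<noteq> {}"
    using ig by (auto simp: ideal_gluing_def)
next
  fix m and i :: nat assume "m \<in> f ` T" "i < 4"
  then obtain t where t: "t \<in> T" "m = f t" and i: "i < 4"
    by auto
  obtain s j where glti: "gl (t, i) = (s, j)"
    by force
  note D = ideal_gluingD[OF ig t(1) i, unfolded glti]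
  show "fst (relabel_gl f T gl (m, i)) \<in> f ` T" "snd (relabel_gl f T gl (m, i)) < 4"
    "relabel_gl f T gl (relabel_gl f T gl (m, i)) = (m, i)"
    "bij_betw (relabel_sg f T sg (m, i)) {..<4} {..<4}"
    "relabel_sg f T sg (m, i) i = snd (relabel_gl f T gl (m, i))"
    using t f glti D by simp_all
  show "fst (relabel_gl f T gl (m, i)) \<noteq> m"
    using t f glti D by (auto dest: inj_onD)
  show "relabel_sg f T sg (relabel_gl f T gl (m, i)) (relabel_sg f T sg (m, i) k) = k" if "k < 4" for k
    using t f glti D that by simp
qed

lemma branched_cover_relabel:
  assumes ig: "ideal_gluing T gl sg" and f: "inj_on f T"
  shows "branched_cover (f ` T) (relabel_gl f T gl) (relabel_sg f T sg) T gl sg (inv_into T f)"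
  unfolding branched_cover_def
proof (intro conjI ballI allI impI)
  show "inv_into T f ` f ` T = T"
    using f by (simp add: image_inv_into_cancel)
next
  fix m and i :: nat assume "m \<in> f ` T" "i < 4"
  then obtain t where t: "t \<in> T" "m = f t" and i: "i < 4"
    by auto
  show "gl (inv_into T f m, i) =
      (inv_into T f (fst (relabel_gl f T gl (m, i))), snd (relabel_gl f T gl (m, i)))"
    using t f ideal_gluingD(1)[OF ig t(1) i] by (simp add: apfst_def map_prod_def split_def)
  show "sg (inv_into T f m, i) k = relabel_sg f T sg (m, i) k" for k
    using t f by simp
qed

section \<open>Voltages of walks\<close>

definition dart_voltage :: "('d \<Rightarrow> 'd) \<Rightarrow> 'd \<Rightarrow> 'd \<Rightarrow> 3" where
  "dart_voltage \<sigma> d x = of_bool (x = d) - of_bool (x = \<sigma> d)"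

lemma dart_voltage_involution:
  "\<sigma> (\<sigma> d) = d \<Longrightarrow> dart_voltage \<sigma> (\<sigma> d) x = - dart_voltage \<sigma> d x"
  by (simp add: dart_voltage_def)

lemma voltage_at_unglued_dart:
  fixes \<sigma> :: "'d \<Rightarrow> 'd" and c :: "nat \<Rightarrow> 'd"
  assumes m: "m \<in> S" and S: "finite S" and unglued: "\<forall>j\<in>S. \<sigma> (c j) \<noteq> c m"
    and repeats: "{j\<in>S. c j = c m} \<subseteq> {m, m'}"
  shows "(\<Sum>i\<in>S. dart_voltage \<sigma> (c i) (c m)) \<noteq> 0"
proof -
  let ?J = "{j\<in>S. c j = c m}"
  have "dart_voltage \<sigma> (c i) (c m) = of_bool (c i = c m)" if "i \<in> S" for i
    using unglued[rule_format, OF that] by (auto simp: dart_voltage_def)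
  then have "(\<Sum>i\<in>S. dart_voltage \<sigma> (c i) (c m)) = (\<Sum>i\<in>S. of_bool (c i = c m))"
    by (rule sum.cong[OF refl])
  also have "\<dots> = of_nat (card ?J)"
    using S by (simp add: Int_def)
  finally have sum: "(\<Sum>i\<in>S. dart_voltage \<sigma> (c i) (c m)) = of_nat (card ?J)" .
  have "finite ?J" "m \<in> ?J"
    using m S by simp_all
  then have "1 \<le> card ?J"
    by (metis Suc_leI One_nat_def card_gt_0_iff empty_iff)
  moreover have "card ?J \<le> card {m, m'}"
    using repeats by (intro card_mono) simp_all
  moreover have "card {m, m'} \<le> 2"
    by (cases "m = m'") simp_all
  ultimately have "card ?J = 1 \<or> card ?J = 2"
    by linarith
  then show ?thesis
    using sum by auto
qed

text \<open>Read \<open>c i\<close> as the \<open>i\<close>-th face crossed, \<open>\<sigma>\<close> as the gluing and \<open>\<tau>\<close> as the tetrahedron a face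
  belongs to.\<close>

locale face_crossing_walk =
  fixes \<sigma> :: "'d \<Rightarrow> 'd" and \<tau> :: "'d \<Rightarrow> 't" and c :: "nat \<Rightarrow> 'd"
  assumes involution: "\<sigma> (\<sigma> (c i)) = c i"
    and crosses: "\<tau> (\<sigma> (c i)) \<noteq> \<tau> (c i)"
    and enters: "\<tau> (c (Suc i)) = \<tau> (\<sigma> (c i))"
    and no_return: "c (Suc i) \<noteq> \<sigma> (c i)"
begin

lemma adjacent_crossings_neq: "i = Suc j \<or> j = Suc i \<Longrightarrow> c i \<noteq> c j"
  using crosses enters by metis

lemma glued_crossing_neq:
  assumes "i \<le> j + 2" "j \<le> i + 2"
  shows "\<sigma> (c i) \<noteq> c j"
proof -
  have ahead: "\<sigma> (c i) \<noteq> c (i + k)" if k: "k \<le> 2" for i k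
  proof -
    consider "k = 0" | "k = 1" | "k = 2"
      using k by arith
    then show ?thesis
    proof cases
      case 1
      then show ?thesis
        using crosses by (metis add_0_right)
    next
      case 2
      then show ?thesis
        by (metis no_return Suc_eq_plus1)
    next
      case 3
      have "\<tau> (c (Suc (Suc i))) \<noteq> \<tau> (\<sigma> (c i))"
        using crosses enters by metis
      then show ?thesis
        using 3 by (metis add_2_eq_Suc')
    qed
  qed
  show ?thesis
  proof (cases "i \<le> j")
    case True
    then show ?thesis
      using ahead[of "j - i" i] assms by simp
  next
    case False
    then have "\<sigma> (c j) \<noteq> c i"
      using ahead[of "i - j" j] assms by simp
    then show ?thesis
      using involution by metis
  qed
qed

lemma voltage_short_window_nonzero:
  assumes "a < b" "b \<le> a + 4"
  shows "\<exists>x. (\<Sum>i\<in>{a..<b}. dart_voltage \<sigma> (c i) x) \<noteq> 0"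
proof (cases "b = a + 1")
  case True
  then show ?thesis
    using voltage_at_unglued_dart[of a "{a..<b}" \<sigma> c a] glued_crossing_neq by auto
next
  case False
  have "j \<in> {a + 1, a + 3}" if "j \<in> {a..<b}" "c j = c (a + 1)" for j
  proof -
    have "j \<in> {a, a + 1, a + 2, a + 3}"
      using that(1) assms by auto
    then show ?thesis
      using that(2) adjacent_crossings_neq by auto
  qed
  then show ?thesis
    using voltage_at_unglued_dart[of "a + 1" "{a..<b}" \<sigma> c "a + 3"] glued_crossing_neq assms False
    by auto
qed

lemma voltage_window_5_nonzero:
  "\<exists>x. (\<Sum>i\<in>{a..<a + 5}. dart_voltage \<sigma> (c i) x) \<noteq> 0"
proof -
  have window: "j \<in> {a, a + 1, a + 2, a + 3, a + 4}" if "j \<in> {a..<a + 5}" for j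
    using that by auto
  consider "c a \<noteq> c (a + 2)" | "c (a + 4) \<noteq> c (a + 2)" | "c a = c (a + 2)" "c (a + 4) = c (a + 2)"
    by blast
  then show ?thesis
  proof cases
    case 1
    have "{j\<in>{a..<a + 5}. c j = c (a + 2)} \<subseteq> {a + 2, a + 4}"
    proof
      fix j assume "j \<in> {j\<in>{a..<a + 5}. c j = c (a + 2)}"
      with window[of j] show "j \<in> {a + 2, a + 4}"
        using adjacent_crossings_neq 1 by auto
    qed
    then show ?thesis
      using voltage_at_unglued_dart[of "a + 2" "{a..<a + 5}" \<sigma> c "a + 4"] glued_crossing_neq by auto
  next
    case 2
    have "{j\<in>{a..<a + 5}. c j = c (a + 2)} \<subseteq> {a + 2, a}"
    proof
      fix j assume "j \<in> {j\<in>{a..<a + 5}. c j = c (a + 2)}"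
      with window[of j] show "j \<in> {a + 2, a}"
        using adjacent_crossings_neq 2 by auto
    qed
    then show ?thesis
      using voltage_at_unglued_dart[of "a + 2" "{a..<a + 5}" \<sigma> c a] glued_crossing_neq by auto
  next
    case 3
    \<comment> \<open>the dart \<open>c (a + 4)\<close> is too far from \<open>c (a + 1)\<close>, but it repeats \<open>c (a + 2)\<close>\<close>
    have "{j\<in>{a..<a + 5}. c j = c (a + 1)} \<subseteq> {a + 1, a + 3}"
    proof
      fix j assume "j \<in> {j\<in>{a..<a + 5}. c j = c (a + 1)}"
      with window[of j] show "j \<in> {a + 1, a + 3}"
        using adjacent_crossings_neq 3 by auto
    qed
    moreover have "\<sigma> (c j) \<noteq> c (a + 1)" if "j \<in> {a..<a + 5}" for j
      using that glued_crossing_neq[of j "a + 1"] glued_crossing_neq[of "a + 2" "a + 1"] 3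
      by (cases "j = a + 4") auto
    ultimately show ?thesis
      using voltage_at_unglued_dart[of "a + 1" "{a..<a + 5}" \<sigma> c "a + 3"] by auto
  qed
qed

lemma voltage_sum_nonzero:
  assumes "a < b" "b \<le> a + 5"
  shows "\<exists>x. (\<Sum>i\<in>{a..<b}. dart_voltage \<sigma> (c i) x) \<noteq> 0"
  using voltage_short_window_nonzero[OF assms(1)] voltage_window_5_nonzero[of a] assms
  by (cases "b = a + 5") auto

end

section \<open>The voltage cover\<close>

definition sheets :: "'d set \<Rightarrow> ('d \<Rightarrow> 3) set" where
  "sheets D = {s. \<forall>x. x \<notin> D \<longrightarrow> s x = 0}"

lemma finite_sheets: "finite D \<Longrightarrow> finite (sheets D)"
  using finite_set_of_finite_funs[of D "UNIV :: 3 set" 0] by (simp add: sheets_def)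

lemma zero_in_sheets: "(\<lambda>_. 0) \<in> sheets D"
  by (simp add: sheets_def)

lemma sheets_add_voltage:
  "s \<in> sheets D \<Longrightarrow> d \<in> D \<Longrightarrow> \<sigma> d \<in> D \<Longrightarrow> (\<lambda>x. s x + dart_voltage \<sigma> d x) \<in> sheets D"
  by (auto simp: sheets_def dart_voltage_def)

definition cover_tets :: "'a set \<Rightarrow> ('a \<times> ('a \<times> nat \<Rightarrow> 3)) set" where
  "cover_tets T = T \<times> sheets (T \<times> {..<4})"

definition cover_gl ::
  "('a \<times> nat \<Rightarrow> 'a \<times> nat) \<Rightarrow>
    ('a \<times> ('a \<times> nat \<Rightarrow> 3)) \<times> nat \<Rightarrow> ('a \<times> ('a \<times> nat \<Rightarrow> 3)) \<times> nat" where
  "cover_gl gl = (\<lambda>((t, s), i). ((fst (gl (t, i)), \<lambda>x. s x + dart_voltage gl (t, i) x), snd (gl (t, i))))"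

definition cover_sg :: "('a \<times> nat \<Rightarrow> nat \<Rightarrow> nat) \<Rightarrow> ('a \<times> 's) \<times> nat \<Rightarrow> nat \<Rightarrow> nat" where
  "cover_sg sg = (\<lambda>((t, s), i). sg (t, i))"

lemma cover_gl_apply [simp]:
  "cover_gl gl ((t, s), i) = ((fst (gl (t, i)), \<lambda>x. s x + dart_voltage gl (t, i) x), snd (gl (t, i)))"
  by (simp add: cover_gl_def)

lemma cover_sg_apply [simp]: "cover_sg sg ((t, s), i) = sg (t, i)"
  by (simp add: cover_sg_def)

lemma ideal_gluing_cover:
  assumes ig: "ideal_gluing T gl sg"
  shows "ideal_gluing (cover_tets T) (cover_gl gl) (cover_sg sg)"
  unfolding ideal_gluing_def
proof (intro conjI ballI allI impI)
  have "finite T" "T \<noteq> {}"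
    using ig by (auto simp: ideal_gluing_def)
  then show "finite (cover_tets T)" "cover_tets T \<noteq> {}"
    using zero_in_sheets finite_sheets[of "T \<times> {..<4}"] by (auto simp: cover_tets_def)
next
  fix ts and i :: nat assume "ts \<in> cover_tets T" and i: "i < 4"
  then obtain t s where ts: "ts = (t, s)" and t: "t \<in> T" and s: "s \<in> sheets (T \<times> {..<4})"
    by (auto simp: cover_tets_def)
  obtain u j where glti: "gl (t, i) = (u, j)"
    by force
  note D = ideal_gluingD[OF ig t i, unfolded glti]
  have round_trip: "(\<lambda>y. s y + dart_voltage gl (t, i) y + dart_voltage gl (u, j) y) = s"
    using dart_voltage_involution[of gl "(t, i)"] D(4) glti by simp
  show "fst (cover_gl gl (ts, i)) \<in> cover_tets T"
    using sheets_add_voltage[OF s, of "(t, i)" gl] t i D glti ts by (simp add: cover_tets_def)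
  show "snd (cover_gl gl (ts, i)) < 4" "fst (cover_gl gl (ts, i)) \<noteq> ts"
    "bij_betw (cover_sg sg (ts, i)) {..<4} {..<4}" "cover_sg sg (ts, i) i = snd (cover_gl gl (ts, i))"
    using D ts glti by auto
  show "cover_gl gl (cover_gl gl (ts, i)) = (ts, i)"
    using D ts glti round_trip by simp
  show "cover_sg sg (cover_gl gl (ts, i)) (cover_sg sg (ts, i) k) = k" if "k < 4" for k
    using D ts glti that by simp
qed

lemma branched_cover_cover_tets:
  "branched_cover (cover_tets T) (cover_gl gl) (cover_sg sg) T gl sg fst"
proof -
  have "fst ` cover_tets T = T"
    using zero_in_sheets by (force simp: cover_tets_def)
  then show ?thesis
    by (auto simp: branched_cover_def cover_tets_def)
qed

section \<open>Walks around an edge\<close>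

lemma exists_free_face:
  fixes F :: "nat set"
  assumes "F \<subseteq> {..<4}" "card F = 2"
  shows "\<exists>g<4. g \<notin> F \<and> g \<noteq> b"
proof (rule ccontr)
  assume "\<not> ?thesis"
  then have "{..<4} - F \<subseteq> {b}"
    by auto
  then have "card ({..<4} - F) \<le> 1"
    using card_mono[of "{b}"] by fastforce
  moreover have "card ({..<4} - F) = 2"
    using assms by (simp add: card_Diff_subset finite_subset)
  ultimately show False
    by simp
qed

text \<open>The walk leaves its \<open>j\<close>-th tetrahedron \<open>fst (c j)\<close> through face \<open>snd (c j)\<close>;
  \<open>Es j\<close> is the edge walked around, in that tetrahedron's vertex labels.\<close>

definition edge_walk ::
  "'a set \<Rightarrow> ('a \<times> nat \<Rightarrow> 'a \<times> nat) \<Rightarrow> ('a \<times> nat \<Rightarrow> nat \<Rightarrow> nat) \<Rightarrow>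
    (nat \<Rightarrow> 'a \<times> nat) \<Rightarrow> (nat \<Rightarrow> nat set) \<Rightarrow> bool" where
  "edge_walk T gl sg c Es \<longleftrightarrow> (\<forall>j.
     (fst (c j), Es j) \<in> tet_edges T \<and> snd (c j) < 4 \<and> snd (c j) \<notin> Es j \<and>
     fst (c (Suc j)) = fst (gl (c j)) \<and> Es (Suc j) = sg (c j) ` Es j \<and> c (Suc j) \<noteq> gl (c j))"

lemma exists_edge_walk:
  assumes ig: "ideal_gluing T gl sg" and tE: "(t, E) \<in> tet_edges T"
  obtains c Es where "fst (c 0) = t" "Es 0 = E" "edge_walk T gl sg c Es"
proof -
  define P where "P n w \<longleftrightarrow> (fst (fst w), snd w) \<in> tet_edges T \<and> snd (fst w) < 4 \<and>
    snd (fst w) \<notin> snd w \<and> (n = 0 \<longrightarrow> fst (fst w) = t \<and> snd w = E)"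
    for n :: nat and w :: "('a \<times> nat) \<times> nat set"
  define Q where "Q w w' \<longleftrightarrow> fst (fst w') = fst (gl (fst w)) \<and> snd w' = sg (fst w) ` snd w \<and>
    fst w' \<noteq> gl (fst w)"
    for w w' :: "('a \<times> nat) \<times> nat set"
  have "\<exists>w. P 0 w"
  proof -
    obtain g where "g < 4" "g \<notin> E"
      using exists_free_face[of E 0] tE by (auto simp: tet_edges_def)
    then show ?thesis
      using tE by (intro exI[of _ "((t, g), E)"]) (simp add: P_def)
  qed
  moreover have "\<exists>w'. P (Suc n) w' \<and> Q w w'" if "P n w" for n w
  proof -
    obtain u i F where w: "w = ((u, i), F)"
      by (metis prod.collapse)
    have uF: "(u, F) \<in> tet_edges T" "i < 4" "i \<notin> F"
      using that w by (simp_all add: P_def)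
    let ?F' = "sg (u, i) ` F"
    have F': "(fst (gl (u, i)), ?F') \<in> tet_edges T"
      by (rule tet_edges_gluing_image[OF ig uF(1,2)])
    obtain g where g: "g < 4" "g \<notin> ?F'" "g \<noteq> snd (gl (u, i))"
      using exists_free_face[of ?F' "snd (gl (u, i))"] F' by (auto simp: tet_edges_def)
    have "P (Suc n) ((fst (gl (u, i)), g), ?F') \<and> Q w ((fst (gl (u, i)), g), ?F')"
      using F' g w by (auto simp: P_def Q_def prod_eq_iff)
    then show ?thesis
      by blast
  qed
  ultimately obtain f where f: "\<And>n. P n (f n) \<and> Q (f n) (f (Suc n))"
    using dependent_nat_choice[of P "\<lambda>_. Q"] by blast
  show ?thesis
    by (rule that[of "fst \<circ> f" "snd \<circ> f"]) (use f in \<open>simp_all add: P_def Q_def edge_walk_def\<close>)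
qed

lemma edge_walk_darts:
  assumes ig: "ideal_gluing T gl sg" and walk: "edge_walk T gl sg c Es"
  shows "c j \<in> T \<times> {..<4}" "gl (c j) \<in> T \<times> {..<4}"
    "fst (gl (c j)) \<noteq> fst (c j)" "gl (gl (c j)) = c j"
proof -
  obtain u i where cj: "c j = (u, i)"
    by force
  have "u \<in> T" "i < 4"
    using walk cj by (auto simp: edge_walk_def tet_edges_def dest: spec[of _ j])
  from ideal_gluingD[OF ig this] show "c j \<in> T \<times> {..<4}" "gl (c j) \<in> T \<times> {..<4}"
    "fst (gl (c j)) \<noteq> fst (c j)" "gl (gl (c j)) = c j"
    using cj \<open>u \<in> T\<close> \<open>i < 4\<close> by (simp_all add: mem_Times_iff)
qed

lemma edge_walk_face_crossing_walk:
  assumes "ideal_gluing T gl sg" "edge_walk T gl sg c Es"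
  shows "face_crossing_walk gl fst c"
  using edge_walk_darts[OF assms] assms(2) by unfold_locales (simp_all add: edge_walk_def)

definition walk_sheet :: "('d \<Rightarrow> 'd) \<Rightarrow> (nat \<Rightarrow> 'd) \<Rightarrow> ('d \<Rightarrow> 3) \<Rightarrow> nat \<Rightarrow> 'd \<Rightarrow> 3" where
  "walk_sheet \<sigma> c s j y = s y + (\<Sum>i<j. dart_voltage \<sigma> (c i) y)"

lemma walk_sheet_Suc:
  "walk_sheet \<sigma> c s (Suc j) = (\<lambda>y. walk_sheet \<sigma> c s j y + dart_voltage \<sigma> (c j) y)"
  by (simp add: walk_sheet_def add.assoc fun_eq_iff)

lemma walk_sheet_diff:
  "a \<le> b \<Longrightarrow> walk_sheet \<sigma> c s b y - walk_sheet \<sigma> c s a y = (\<Sum>i\<in>{a..<b}. dart_voltage \<sigma> (c i) y)"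
  using sum_diff_nat_ivl[of 0 a b "\<lambda>i. dart_voltage \<sigma> (c i) y"]
  by (simp add: walk_sheet_def atLeast0LessThan)

lemma edge_walk_sheets:
  assumes ig: "ideal_gluing T gl sg" and walk: "edge_walk T gl sg c Es"
    and s: "s \<in> sheets (T \<times> {..<4})"
  shows "walk_sheet gl c s j \<in> sheets (T \<times> {..<4})"
proof (induction j)
  case 0
  then show ?case
    using s by (simp add: walk_sheet_def fun_eq_iff)
next
  case (Suc j)
  from sheets_add_voltage[where \<sigma> = gl, OF Suc edge_walk_darts(1,2)[OF ig walk]] show ?case
    by (simp only: walk_sheet_Suc)
qed

lemma edge_walk_lift:
  assumes ig: "ideal_gluing T gl sg" and walk: "edge_walk T gl sg c Es"
    and s: "s \<in> sheets (T \<times> {..<4})"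
  shows "(((fst (c 0), s), Es 0), ((fst (c j), walk_sheet gl c s j), Es j))
    \<in> (edge_rel (cover_tets T) (cover_gl gl) (cover_sg sg))\<^sup>*"
proof (induction j)
  case 0
  have "walk_sheet gl c s 0 = s"
    by (simp add: walk_sheet_def fun_eq_iff)
  then show ?case
    by simp
next
  case (Suc j)
  have "((fst (c j), walk_sheet gl c s j), Es j) \<in> tet_edges (cover_tets T)"
    using walk edge_walk_sheets[OF ig walk s]
    by (simp add: edge_walk_def tet_edges_def cover_tets_def)
  from edge_relI[OF this, of "snd (c j)" "cover_gl gl" "cover_sg sg"]
  have "(((fst (c j), walk_sheet gl c s j), Es j),
      ((fst (c (Suc j)), walk_sheet gl c s (Suc j)), Es (Suc j)))
      \<in> edge_rel (cover_tets T) (cover_gl gl) (cover_sg sg)"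
    using walk by (simp add: edge_walk_def walk_sheet_Suc)
  with Suc show ?case
    by (rule rtrancl_into_rtrancl)
qed

lemma edge_index_cover_tets_ge_6:
  assumes ig: "ideal_gluing T gl sg" and x: "x \<in> tet_edges (cover_tets T)"
  shows "6 \<le> edge_index (cover_tets T) (cover_gl gl) (cover_sg sg) x"
proof -
  obtain t s E where x_eq: "x = ((t, s), E)" and s: "s \<in> sheets (T \<times> {..<4})"
    and tE: "(t, E) \<in> tet_edges T"
    using x by (auto simp: tet_edges_def cover_tets_def)
  obtain c Es where c0: "fst (c 0) = t" "Es 0 = E" and walk: "edge_walk T gl sg c Es"
    using exists_edge_walk[OF ig tE] .
  interpret face_crossing_walk gl fst c
    by (rule edge_walk_face_crossing_walk[OF ig walk])
  define node where "node j = ((fst (c j), walk_sheet gl c s j), Es j)" for j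
  have distinct: "node a \<noteq> node b" if "a < b" "b \<le> 5" for a b
  proof
    assume "node a = node b"
    then have "(\<Sum>i\<in>{a..<b}. dart_voltage gl (c i) y) = 0" for y
      using walk_sheet_diff[of a b gl c s y] that by (simp add: node_def)
    then show False
      using voltage_sum_nonzero[of a b] that by simp
  qed
  have "inj_on node {..<6}"
  proof (rule inj_onI)
    fix a b assume "a \<in> {..<6}" "b \<in> {..<6}" "node a = node b"
    then show "a = b"
      using distinct[of a b] distinct[of b a] by (cases a b rule: linorder_cases) auto
  qed
  then have "card (node ` {..<6}) = 6"
    by (simp add: card_image)
  moreover have "node ` {..<6} \<subseteq> (edge_rel (cover_tets T) (cover_gl gl) (cover_sg sg))\<^sup>* `` {x}"
    using edge_walk_lift[OF ig walk s] by (auto simp: node_def x_eq c0)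
  ultimately show ?thesis
    unfolding edge_index_def
    by (metis card_mono finite_edge_class[OF ideal_gluing_cover[OF ig] x])
qed

theorem proposition3p9:
  fixes T :: "'a set" and gl :: "'a \<times> nat \<Rightarrow> 'a \<times> nat" and sg :: "'a \<times> nat \<Rightarrow> nat \<Rightarrow> nat"
  assumes "triangulated_ideal_3mfd T gl sg"
  shows "\<exists>(T' :: nat set) gl' sg' p.
           triangulated_ideal_3mfd T' gl' sg' \<and>
           branched_cover T' gl' sg' T gl sg p \<and>
           (\<forall>x\<in>tet_edges T'. edge_index T' gl' sg' x \<ge> 6)"
proof -
  let ?C = "cover_tets T" and ?gl = "cover_gl gl" and ?sg = "cover_sg sg"
  have ig: "ideal_gluing T gl sg"
    using assms by (simp add: triangulated_ideal_3mfd_def)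
  then have igC: "ideal_gluing ?C ?gl ?sg"
    by (rule ideal_gluing_cover)
  then obtain f :: "_ \<Rightarrow> nat" where f: "inj_on f ?C"
    using finite_imp_inj_to_nat_seg by (metis ideal_gluing_def)
  let ?gl' = "relabel_gl f ?C ?gl" and ?sg' = "relabel_sg f ?C ?sg"
  have ig': "ideal_gluing (f ` ?C) ?gl' ?sg'"
    by (rule ideal_gluing_relabel[OF igC f])
  have relabel: "branched_cover (f ` ?C) ?gl' ?sg' ?C ?gl ?sg (inv_into ?C f)"
    by (rule branched_cover_relabel[OF igC f])
  have bc: "branched_cover (f ` ?C) ?gl' ?sg' T gl sg (fst \<circ> inv_into ?C f)"
    by (rule branched_cover_comp[OF relabel branched_cover_cover_tets])
  have "\<forall>x\<in>tet_edges (f ` ?C). 6 \<le> edge_index (f ` ?C) ?gl' ?sg' x"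
    using edge_index_bound_cover[OF ig' relabel] edge_index_cover_tets_ge_6[OF ig] by blast
  then show ?thesis
    using triangulated_ideal_3mfd_cover[OF ig' bc assms] bc by blast
qed

end
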